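(* Let $m\ge 2$ be fixed and assume (A1)–(A4). Let $X_{\mathbf 1}$ be the number of coupons collected by all $m$ collectors. Then $$\operatorname{Var}(X_{\mathbf 1})\asymp \frac{(n-a_1)(n-a_2)}{n}\prod_{i=1}^m\frac{a_i}{n}=\Big(1-\frac{a_1}{n}\Big)\Big(1-\frac{a_2}{n}\Big)\mathbb{E}(X_{\mathbf 1}).$$
   Context: Coupon collector model: there are $n$ distinct coupons and $m$ collectors acting independently; collector $i$ collects a uniformly random subset of exactly $a_i$ distinct coupons, independently of the others. We consider a sequence of such models indexed by $n$, with $m$ fixed and $a_i=a_i(n)$, under the asymptotic assumptions: (A1) $n\to\infty$; (A2) $a_i\to\infty$ and $n-a_i\to\infty$ for each $i=1,\dots,m$; (A3) $1\le a_1\le a_2\le\cdots\le a_m\le n-1$; (A4) $a_i/n\to\alpha_i\in[0,1]$ for each $i$. For positive sequences, $x_n\asymp y_n$ means that both $\limsup x_n/y_n$ and $\liminf x_n/y_n$ are finite and strictly positive. *)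

theory Defs
  imports "HOL-Probability.Probability"
begin

definition coupon_model :: "nat \<Rightarrow> nat \<Rightarrow> (nat \<Rightarrow> nat) \<Rightarrow> (nat \<Rightarrow> nat set) pmf" where
  "coupon_model n m a =
     Pi_pmf {1..m} {} (\<lambda>i. pmf_of_set {S. S \<subseteq> {..<n} \<and> card S = a i})"

definition X_all :: "nat \<Rightarrow> (nat \<Rightarrow> nat set) \<Rightarrow> real" where
  "X_all m f = real (card (\<Inter>i\<in>{1..m}. f i))"

definition asymp_order :: "(nat \<Rightarrow> real) \<Rightarrow> (nat \<Rightarrow> real) \<Rightarrow> bool" where
  "asymp_order x y \<longleftrightarrow>
     0 < limsup (\<lambda>k. ereal (x k / y k)) \<and> limsup (\<lambda>k. ereal (x k / y k)) < \<infinity> \<and>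
     0 < liminf (\<lambda>k. ereal (x k / y k)) \<and> liminf (\<lambda>k. ereal (x k / y k)) < \<infinity>"

end

(* Write X_all as the sum over coupons j of the indicator that every collector has j. By
   independence of the collectors, E X = n P and E X^2 = n P + n (n - 1) P Q with
   P = prod a_i / n and Q = prod (a_i - 1) / (n - 1), so Var X = E X * D with
   D = 1 - n P + (n - 1) Q. Adding the collectors one at a time, D becomes a convex combination,
   with weight a_i / n, of its previous value and 1 - prod (a_i - 1) / (n - 1); this keeps
   D between (1 - a_1/n)(1 - a_2/n) and 2 m^2 times that quantity. *)

theory Submission
  imports Defs
begin

definition k_subsets :: "'a set \<Rightarrow> nat \<Rightarrow> 'a set set" where
  "k_subsets A k = {S. S \<subseteq> A \<and> card S = k}"

lemma finite_k_subsets: "finite A \<Longrightarrow> finite (k_subsets A k)"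
  unfolding k_subsets_def by (rule finite_subset[of _ "Pow A"]) auto

lemma card_k_subsets: "finite A \<Longrightarrow> card (k_subsets A k) = card A choose k"
  unfolding k_subsets_def by (rule n_subsets)

lemma k_subsets_nonempty: "finite A \<Longrightarrow> k \<le> card A \<Longrightarrow> k_subsets A k \<noteq> {}"
  using card_k_subsets[of A k] by fastforce

lemma card_k_subsets_containing:
  assumes "finite A" "B \<subseteq> A" "card B \<le> k"
  shows "card {S \<in> k_subsets A k. B \<subseteq> S} = (card A - card B) choose (k - card B)"
proof -
  have "bij_betw (\<lambda>T. T \<union> B) (k_subsets (A - B) (k - card B)) {S \<in> k_subsets A k. B \<subseteq> S}"
  proof (rule bij_betw_byWitness[where f' = "\<lambda>S. S - B"])
    show "(\<lambda>T. T \<union> B) ` k_subsets (A - B) (k - card B) \<subseteq> {S \<in> k_subsets A k. B \<subseteq> S}"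
    proof safe
      fix T assume "T \<in> k_subsets (A - B) (k - card B)"
      moreover have "finite T" "finite B" using calculation assms
        by (auto simp: k_subsets_def intro: finite_subset)
      moreover have "T \<inter> B = {}" using calculation by (auto simp: k_subsets_def)
      ultimately show "T \<union> B \<in> k_subsets A k"
        using assms by (auto simp: k_subsets_def card_Un_disjoint)
    qed
    show "(\<lambda>S. S - B) ` {S \<in> k_subsets A k. B \<subseteq> S} \<subseteq> k_subsets (A - B) (k - card B)"
    proof safe
      fix S assume "S \<in> k_subsets A k" "B \<subseteq> S"
      moreover have "finite S" using calculation assms(1) by (auto simp: k_subsets_def intro: finite_subset)
      ultimately show "S - B \<in> k_subsets (A - B) (k - card B)"
        by (auto simp: k_subsets_def card_Diff_subset finite_subset)
    qed
  qed (unfold k_subsets_def, blast+)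
  then show ?thesis
    using assms by (simp add: bij_betw_same_card[symmetric] card_k_subsets card_Diff_subset finite_subset)
qed

lemma times_binomial_minus2_eq:
  assumes "2 \<le> k"
  shows "k * (k - 1) * (n choose k) = n * (n - 1) * ((n - 2) choose (k - 2))"
proof -
  have "k * (n choose k) = n * ((n - 1) choose (k - 1))"
    using assms by (simp add: times_binomial_minus1_eq)
  moreover have "(k - 1) * ((n - 1) choose (k - 1)) = (n - 1) * ((n - 2) choose (k - 2))"
    using times_binomial_minus1_eq[of "k - 1" "n - 1"] assms by (simp add: numeral_2_eq_2)
  ultimately show ?thesis by (metis mult.assoc mult.left_commute)
qed

lemma expectation_superset_of_uniform_subset:
  assumes "finite A" "k \<le> card A"
  shows "measure_pmf.expectation (pmf_of_set (k_subsets A k)) (\<lambda>S. of_bool (B \<subseteq> S))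
           = real (card {S \<in> k_subsets A k. B \<subseteq> S}) / real (card A choose k)"
  using assms
  by (simp add: integral_pmf_of_set k_subsets_nonempty finite_k_subsets card_k_subsets Int_def)

lemma expectation_member_of_uniform_subset:
  assumes "finite A" "j \<in> A" "k \<le> card A"
  shows "measure_pmf.expectation (pmf_of_set (k_subsets A k)) (\<lambda>S. of_bool (j \<in> S))
           = real k / real (card A)"
proof (cases "k = 0")
  case True
  have "k_subsets A 0 = {{}}"
    using assms(1) by (auto simp: k_subsets_def card_0_eq finite_subset)
  then show ?thesis using True by (simp add: pmf_of_set_singleton)
next
  case False
  have "real k * real (card A choose k) = real (card A) * real ((card A - 1) choose (k - 1))"
    using False by (metis of_nat_mult times_binomial_minus1_eq neq0_conv)
  moreover have "card A choose k > 0" "card A > 0"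
    using assms by (auto simp: card_gt_0_iff)
  moreover have "measure_pmf.expectation (pmf_of_set (k_subsets A k)) (\<lambda>S. of_bool (j \<in> S))
      = real ((card A - 1) choose (k - 1)) / real (card A choose k)"
    using expectation_superset_of_uniform_subset[of A k "{j}"]
          card_k_subsets_containing[of A "{j}" k] assms False
    by simp
  ultimately show ?thesis by (simp add: frac_eq_eq mult.commute)
qed

lemma expectation_pair_of_uniform_subset:
  assumes "finite A" "j \<in> A" "l \<in> A" "j \<noteq> l" "k \<le> card A"
  shows "measure_pmf.expectation (pmf_of_set (k_subsets A k)) (\<lambda>S. of_bool (j \<in> S \<and> l \<in> S))
           = real k * (real k - 1) / (real (card A) * (real (card A) - 1))"
proof -
  have E: "measure_pmf.expectation (pmf_of_set (k_subsets A k)) (\<lambda>S. of_bool (j \<in> S \<and> l \<in> S))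
      = real (card {S \<in> k_subsets A k. {j, l} \<subseteq> S}) / real (card A choose k)"
    using expectation_superset_of_uniform_subset[of A k "{j, l}"] assms(1,5)
    by (simp only: insert_subset empty_subsetI simp_thms)
  have "card A \<ge> 2"
    using card_mono[OF assms(1), of "{j, l}"] assms(2-4) by simp
  consider "k < 2" | "k \<ge> 2" by linarith
  then show ?thesis
  proof cases
    case 1
    have "\<not> {j, l} \<subseteq> S" if "S \<in> k_subsets A k" for S
    proof
      assume "{j, l} \<subseteq> S"
      moreover have "finite S" using that assms(1) by (auto simp: k_subsets_def intro: finite_subset)
      ultimately have "2 \<le> card S" using card_mono[of S "{j, l}"] assms(4) by simp
      then show False using that \<open>k < 2\<close> by (simp add: k_subsets_def)
    qed
    then have no_pair: "{S \<in> k_subsets A k. {j, l} \<subseteq> S} = {}" by blast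
    have "k = 0 \<or> k = 1" using \<open>k < 2\<close> by linarith
    then show ?thesis unfolding E no_pair by (elim disjE) simp_all
  next
    case 2
    have "real k * (real k - 1) * real (card A choose k)
            = real (card A) * (real (card A) - 1) * real ((card A - 2) choose (k - 2))"
      using arg_cong[OF times_binomial_minus2_eq[of k "card A"], of real] \<open>k \<ge> 2\<close> \<open>card A \<ge> 2\<close>
      by (simp add: of_nat_diff)
    moreover have "real (card A choose k) \<noteq> 0" "real (card A) * (real (card A) - 1) \<noteq> 0"
      using assms \<open>card A \<ge> 2\<close> by auto
    moreover have "card {S \<in> k_subsets A k. {j, l} \<subseteq> S} = (card A - 2) choose (k - 2)"
      using card_k_subsets_containing[of A "{j, l}" k] assms \<open>k \<ge> 2\<close> by (simp add: numeral_2_eq_2)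
    ultimately show ?thesis unfolding E by (simp add: frac_eq_eq algebra_simps)
  qed
qed

lemma one_minus_prod_le_sum:
  fixes z :: "'a \<Rightarrow> real"
  assumes "finite A" "\<And>i. i \<in> A \<Longrightarrow> 0 \<le> z i \<and> z i \<le> 1"
  shows "1 - prod z A \<le> (\<Sum>i\<in>A. 1 - z i)"
  using assms
proof (induction A rule: finite_induct)
  case (insert x F)
  have "0 \<le> prod z F" "prod z F \<le> 1"
    using insert.prems by (auto intro: prod_nonneg prod_le_1)
  moreover have "0 \<le> z x" "z x \<le> 1" using insert.prems by auto
  ultimately have "z x * (1 - prod z F) \<le> 1 - prod z F"
    by (simp add: mult_left_le_one_le)
  then have "1 - z x * prod z F \<le> (1 - z x) + (1 - prod z F)"
    by (simp add: algebra_simps)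
  then show ?case using insert by simp
qed simp

lemma prod_le_factor:
  fixes z :: "'a \<Rightarrow> real"
  assumes "finite A" "j \<in> A" "\<And>i. i \<in> A \<Longrightarrow> 0 \<le> z i \<and> z i \<le> 1"
  shows "prod z A \<le> z j"
proof -
  have "prod z A = z j * prod z (A - {j})" using assms(1,2) by (simp add: prod.remove)
  moreover have "prod z (A - {j}) \<le> 1" "0 \<le> z j" using assms by (auto intro: prod_le_1)
  ultimately show ?thesis by (simp add: mult_left_le)
qed

text \<open>The variance-to-mean ratio of X_all is the case p i = a i / n, y i = (a i - 1) / (n - 1).\<close>
definition dispersion :: "real \<Rightarrow> ('a \<Rightarrow> real) \<Rightarrow> ('a \<Rightarrow> real) \<Rightarrow> 'a set \<Rightarrow> real" where
  "dispersion n p y A = 1 - n * prod p A + (n - 1) * prod y A"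

lemma rescaled_prob_bounds:
  fixes n p y :: real
  assumes "1 < n" "(n - 1) * y = n * p - 1" "0 \<le> y" "y \<le> 1"
  shows "0 \<le> p" "p \<le> 1" "y \<le> p"
proof -
  have "n * p = (n - 1) * y + 1" using assms(2) by simp
  moreover have "0 \<le> (n - 1) * y" "(n - 1) * y \<le> n - 1"
    using assms(1,3,4) mult_left_le[of y "n - 1"] by auto
  ultimately have "0 \<le> n * p" "n * p \<le> n" by auto
  then show "0 \<le> p" "p \<le> 1"
    using assms(1) by (auto simp: zero_le_mult_iff mult_le_cancel_left1)
  have "(n - 1) * (y - p) = p - 1" using assms(2) by (simp add: algebra_simps)
  with \<open>p \<le> 1\<close> have "(n - 1) * (y - p) \<le> 0" by simp
  with assms(1) show "y \<le> p" by (simp add: mult_le_0_iff)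
qed

lemma dispersion_insert_bounds:
  fixes n :: real and p y :: "'a \<Rightarrow> real"
  assumes "finite A" "x \<notin> A" "1 < n"
    and rel: "\<And>i. i \<in> insert x A \<Longrightarrow> (n - 1) * y i = n * p i - 1"
    and y01: "\<And>i. i \<in> insert x A \<Longrightarrow> 0 \<le> y i \<and> y i \<le> 1"
  shows "(1 - p x) * (1 - prod p A) \<le> dispersion n p y (insert x A)
       \<and> dispersion n p y (insert x A) \<le> (1 - prod y (insert x A)) * (1 - prod p A)"
  using assms(1,2) rel y01
proof (induction A rule: finite_induct)
  case empty
  then show ?case by (simp add: dispersion_def)
next
  case (insert q F)
  have p_bounds: "0 \<le> p i" "p i \<le> 1" "y i \<le> p i" if "i \<in> insert x (insert q F)" for i
  proof -
    have "(n - 1) * y i = n * p i - 1" "0 \<le> y i" "y i \<le> 1"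
      using insert.prems(2,3)[OF that] by auto
    then show "0 \<le> p i" "p i \<le> 1" "y i \<le> p i"
      using rescaled_prob_bounds[OF \<open>1 < n\<close>] by blast+
  qed
  define D where "D = dispersion n p y (insert x F)"
  define Y where "Y = prod y (insert x F)"
  define R where "R = prod p F"
  have IH: "(1 - p x) * (1 - R) \<le> D" "D \<le> (1 - Y) * (1 - R)"
    using insert by (auto simp: D_def Y_def R_def)
  have "0 \<le> Y" "Y \<le> 1" "0 \<le> R" "R \<le> 1"
    using insert.prems p_bounds
    by (auto simp: Y_def R_def intro!: prod_nonneg prod_le_1)
  have "Y \<le> y x"
    unfolding Y_def using insert.hyps(1) insert.prems(3) by (intro prod_le_factor) auto
  have "0 \<le> p q" "p q \<le> 1" "0 \<le> y q" "y q \<le> 1" "y x \<le> p x"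
    using p_bounds insert.prems(3) by auto
  have swap: "insert x (insert q F) = insert q (insert x F)" by auto
  have "q \<notin> insert x F" using insert.hyps(2) insert.prems(1) by auto
  then have prods: "prod p (insert x (insert q F)) = p q * prod p (insert x F)"
      "prod y (insert x (insert q F)) = y q * Y"
    using insert.hyps(1) unfolding swap Y_def by simp_all
  have step: "dispersion n p y (insert x (insert q F)) = p q * D + (1 - p q) * (1 - Y)"
  proof -
    have "(n - 1) * (y q * Y) = (n * p q - 1) * Y" using insert.prems(2) by (simp add: mult.assoc[symmetric])
    then show ?thesis
      unfolding dispersion_def prods D_def Y_def by (simp add: algebra_simps)
  qed
  have "(1 - p x) * (1 - p q * R) = p q * ((1 - p x) * (1 - R)) + (1 - p q) * (1 - p x)"
    by (simp add: algebra_simps)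
  also have "\<dots> \<le> p q * D + (1 - p q) * (1 - Y)"
    using IH(1) \<open>0 \<le> p q\<close> \<open>p q \<le> 1\<close> \<open>Y \<le> y x\<close> \<open>y x \<le> p x\<close>
    by (intro add_mono mult_left_mono) auto
  finally have lower: "(1 - p x) * (1 - p q * R) \<le> p q * D + (1 - p q) * (1 - Y)" .
  have "p q * D + (1 - p q) * (1 - Y) \<le> p q * ((1 - Y) * (1 - R)) + (1 - p q) * (1 - Y)"
    using IH(2) \<open>0 \<le> p q\<close> by (simp add: mult_left_mono)
  also have "\<dots> = (1 - Y) * (1 - p q * R)"
    by (simp add: algebra_simps)
  also have "\<dots> \<le> (1 - y q * Y) * (1 - p q * R)"
    using \<open>0 \<le> Y\<close> \<open>0 \<le> y q\<close> \<open>y q \<le> 1\<close> \<open>0 \<le> p q\<close> \<open>p q \<le> 1\<close> \<open>0 \<le> R\<close> \<open>R \<le> 1\<close>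
    by (intro mult_right_mono) (auto simp: mult_left_le_one_le mult_le_one)
  finally have upper: "p q * D + (1 - p q) * (1 - Y) \<le> (1 - y q * Y) * (1 - p q * R)" .
  show ?case
    using lower upper insert.hyps(1,2) unfolding step prods(2) by (simp add: R_def)
qed

lemma dispersion_bounds:
  fixes n :: real and p y :: "nat \<Rightarrow> real"
  assumes "2 \<le> n" "2 \<le> m"
    and rel: "\<And>i. i \<in> {1..m} \<Longrightarrow> (n - 1) * y i = n * p i - 1"
    and y01: "\<And>i. i \<in> {1..m} \<Longrightarrow> 0 \<le> y i \<and> y i \<le> 1"
    and p1_min: "\<And>i. i \<in> {1..m} \<Longrightarrow> p 1 \<le> p i"
    and p2_min: "\<And>i. i \<in> {2..m} \<Longrightarrow> p 2 \<le> p i"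
  shows "(1 - p 1) * (1 - p 2) \<le> dispersion n p y {1..m}"
    and "dispersion n p y {1..m} \<le> 2 * real m ^ 2 * ((1 - p 1) * (1 - p 2))"
proof -
  have p_bounds: "0 \<le> p i" "p i \<le> 1" if "i \<in> {1..m}" for i
    using rescaled_prob_bounds[OF _ rel[OF that]] y01[OF that] \<open>2 \<le> n\<close> by auto
  have split: "{1..m} = insert 1 {2..m}" "1 \<notin> {2..m::nat}" using \<open>2 \<le> m\<close> by auto
  define R where "R = prod p {2..m}"
  define Y where "Y = prod y {1..m}"
  have bounds: "(1 - p 1) * (1 - R) \<le> dispersion n p y {1..m}"
      "dispersion n p y {1..m} \<le> (1 - Y) * (1 - R)"
    using dispersion_insert_bounds[of "{2..m}" 1 n y p] \<open>2 \<le> n\<close> rel y01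
    unfolding R_def Y_def split(1)[symmetric] by auto
  have "R \<le> p 2"
    unfolding R_def using \<open>2 \<le> m\<close> p_bounds by (intro prod_le_factor) auto
  then have "(1 - p 1) * (1 - p 2) \<le> (1 - p 1) * (1 - R)"
    using p_bounds[of 1] \<open>2 \<le> m\<close> by (intro mult_left_mono) auto
  with bounds(1) show "(1 - p 1) * (1 - p 2) \<le> dispersion n p y {1..m}" by linarith
  have "1 - y i \<le> 2 * (1 - p 1)" if "i \<in> {1..m}" for i
  proof -
    have "(n - 1) * (1 - y i) = n * (1 - p i)" using rel[OF that] by (simp add: algebra_simps)
    also have "\<dots> \<le> (2 * (n - 1)) * (1 - p i)"
      using \<open>2 \<le> n\<close> p_bounds[OF that] by (intro mult_right_mono) auto
    also have "\<dots> = (n - 1) * (2 * (1 - p i))" by (simp add: algebra_simps)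
    finally have "1 - y i \<le> 2 * (1 - p i)"
      using \<open>2 \<le> n\<close> by (subst (asm) mult_le_cancel_left_pos) auto
    then show ?thesis using p1_min[OF that] by simp
  qed
  then have "1 - Y \<le> real m * (2 * (1 - p 1))"
    using one_minus_prod_le_sum[of "{1..m}" y] y01 sum_mono[of "{1..m}" "\<lambda>i. 1 - y i" "\<lambda>_. 2 * (1 - p 1)"]
    by (simp add: Y_def)
  moreover have "1 - R \<le> real m * (1 - p 2)"
  proof -
    have "1 - R \<le> (\<Sum>i\<in>{2..m}. 1 - p i)"
      unfolding R_def using p_bounds by (intro one_minus_prod_le_sum) auto
    also have "\<dots> \<le> (\<Sum>i\<in>{2..m}. 1 - p 2)" using p2_min by (intro sum_mono) auto
    also have "\<dots> \<le> real m * (1 - p 2)"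
      using p_bounds[of 2] \<open>2 \<le> m\<close> by (simp add: mult_right_mono)
    finally show ?thesis .
  qed
  moreover have "0 \<le> 1 - Y" "0 \<le> 1 - R"
    using y01 p_bounds by (auto simp: Y_def R_def intro!: prod_le_1)
  ultimately have "(1 - Y) * (1 - R) \<le> (real m * (2 * (1 - p 1))) * (real m * (1 - p 2))"
    by (intro mult_mono) auto
  with bounds(2) show "dispersion n p y {1..m} \<le> 2 * real m ^ 2 * ((1 - p 1) * (1 - p 2))"
    by (simp add: power2_eq_square algebra_simps)
qed

lemma prod_of_bool:
  "finite I \<Longrightarrow> (\<Prod>i\<in>I. of_bool (P i)) = (of_bool (\<forall>i\<in>I. P i) :: 'a :: comm_semiring_1)"
  by (induction I rule: finite_induct) auto

locale coupon_collection =
  fixes n m :: nat and a :: "nat \<Rightarrow> nat"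
  assumes collectors_nonempty: "1 \<le> m"
    and sizes_le: "\<And>i. i \<in> {1..m} \<Longrightarrow> a i \<le> n"
begin

abbreviation model :: "(nat \<Rightarrow> nat set) pmf" where
  "model \<equiv> coupon_model n m a"

definition prob_all :: real where
  "prob_all = (\<Prod>i\<in>{1..m}. real (a i) / real n)"

text \<open>Probability that a fixed coupon is collected by everybody, given that another one is.\<close>
definition cond_prob_all :: real where
  "cond_prob_all = (\<Prod>i\<in>{1..m}. (real (a i) - 1) / (real n - 1))"

lemma model_eq: "model = Pi_pmf {1..m} {} (\<lambda>i. pmf_of_set (k_subsets {..<n} (a i)))"
  unfolding coupon_model_def k_subsets_def ..

lemma set_pmf_collector:
  "i \<in> {1..m} \<Longrightarrow> set_pmf (pmf_of_set (k_subsets {..<n} (a i))) = k_subsets {..<n} (a i)"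
  by (simp add: finite_k_subsets k_subsets_nonempty sizes_le)

lemma set_pmf_model: "set_pmf model = PiE_dflt {1..m} {} (\<lambda>i. k_subsets {..<n} (a i))"
  unfolding model_eq by (auto simp: set_Pi_pmf PiE_dflt_def set_pmf_collector)

lemma finite_set_pmf_model: "finite (set_pmf model)"
  unfolding set_pmf_model by (intro finite_PiE_dflt finite_k_subsets) auto

lemma X_all_eq_sum:
  assumes "f \<in> set_pmf model"
  shows "X_all m f = (\<Sum>j<n. \<Prod>i\<in>{1..m}. of_bool (j \<in> f i))"
proof -
  have "f 1 \<subseteq> {..<n}"
    using assms collectors_nonempty by (auto simp: set_pmf_model PiE_dflt_def k_subsets_def)
  then have "(\<Inter>i\<in>{1..m}. f i) = {..<n} \<inter> {j. \<forall>i\<in>{1..m}. j \<in> f i}"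
    using collectors_nonempty by auto
  then show ?thesis
    by (simp add: X_all_def prod_of_bool)
qed

lemma X_all_squared_eq_sum:
  assumes "f \<in> set_pmf model"
  shows "(X_all m f)\<^sup>2 = (\<Sum>j<n. \<Sum>l<n. \<Prod>i\<in>{1..m}. of_bool (j \<in> f i \<and> l \<in> f i))"
  unfolding X_all_eq_sum[OF assms] power2_eq_square sum_product
  by (simp add: of_bool_conj prod.distrib)

lemma expectation_prod_collectors:
  fixes g :: "nat \<Rightarrow> nat set \<Rightarrow> real"
  assumes "\<And>i S. g i S \<ge> 0"
  shows "measure_pmf.expectation model (\<lambda>f. \<Prod>i\<in>{1..m}. g i (f i))
           = (\<Prod>i\<in>{1..m}. measure_pmf.expectation (pmf_of_set (k_subsets {..<n} (a i))) (g i))"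
  unfolding model_eq using assms
  by (intro expectation_prod_Pi_pmf integrable_measure_pmf_finite)
     (auto simp: set_pmf_collector finite_k_subsets)

lemma expectation_collected_by_all:
  assumes "j < n"
  shows "measure_pmf.expectation model (\<lambda>f. \<Prod>i\<in>{1..m}. of_bool (j \<in> f i)) = prob_all"
proof -
  have "measure_pmf.expectation model (\<lambda>f. \<Prod>i\<in>{1..m}. of_bool (j \<in> f i))
      = (\<Prod>i\<in>{1..m}. measure_pmf.expectation (pmf_of_set (k_subsets {..<n} (a i)))
                         (\<lambda>S. of_bool (j \<in> S) :: real))"
    by (rule expectation_prod_collectors[where g = "\<lambda>_ S. of_bool (j \<in> S)"]) simp
  also have "\<dots> = prob_all"
    unfolding prob_all_def using assms sizes_le
    by (intro prod.cong refl) (simp add: expectation_member_of_uniform_subset)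
  finally show ?thesis .
qed

lemma expectation_pair_collected_by_all:
  assumes "j < n" "l < n" "j \<noteq> l"
  shows "measure_pmf.expectation model (\<lambda>f. \<Prod>i\<in>{1..m}. of_bool (j \<in> f i \<and> l \<in> f i))
           = prob_all * cond_prob_all"
proof -
  have "measure_pmf.expectation model (\<lambda>f. \<Prod>i\<in>{1..m}. of_bool (j \<in> f i \<and> l \<in> f i))
      = (\<Prod>i\<in>{1..m}. measure_pmf.expectation (pmf_of_set (k_subsets {..<n} (a i)))
                         (\<lambda>S. of_bool (j \<in> S \<and> l \<in> S) :: real))"
    by (rule expectation_prod_collectors[where g = "\<lambda>_ S. of_bool (j \<in> S \<and> l \<in> S)"]) simp
  also have "\<dots> = prob_all * cond_prob_all"
    unfolding prob_all_def cond_prob_all_def prod.distrib[symmetric] using assms sizes_le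
    by (intro prod.cong refl) (simp add: expectation_pair_of_uniform_subset)
  finally show ?thesis .
qed

lemma expectation_X_all: "measure_pmf.expectation model (X_all m) = real n * prob_all"
proof -
  have "measure_pmf.expectation model (X_all m)
      = measure_pmf.expectation model (\<lambda>f. \<Sum>j<n. \<Prod>i\<in>{1..m}. of_bool (j \<in> f i))"
    by (intro integral_cong_AE AE_pmfI) (auto simp: X_all_eq_sum)
  also have "\<dots> = (\<Sum>j<n. measure_pmf.expectation model (\<lambda>f. \<Prod>i\<in>{1..m}. of_bool (j \<in> f i)))"
    by (intro Bochner_Integration.integral_sum integrable_measure_pmf_finite finite_set_pmf_model)
  also have "\<dots> = (\<Sum>j<n. prob_all)"
    by (intro sum.cong refl expectation_collected_by_all) simp
  finally show ?thesis by simp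
qed

lemma expectation_X_all_squared:
  "measure_pmf.expectation model (\<lambda>f. (X_all m f)\<^sup>2)
     = real n * prob_all + real n * (real n - 1) * (prob_all * cond_prob_all)"
proof -
  let ?pair = "\<lambda>j l. measure_pmf.expectation model (\<lambda>f. \<Prod>i\<in>{1..m}. of_bool (j \<in> f i \<and> l \<in> f i))"
  have row_sum: "(\<Sum>l<n. ?pair j l) = prob_all + (real n - 1) * (prob_all * cond_prob_all)"
    if "j < n" for j
  proof -
    have "(\<Sum>l<n. ?pair j l) = ?pair j j + (\<Sum>l\<in>{..<n} - {j}. ?pair j l)"
      using that by (simp add: sum.remove)
    also have "\<dots> = prob_all + (\<Sum>l\<in>{..<n} - {j}. prob_all * cond_prob_all)"
      using that expectation_collected_by_all[OF that]
      by (intro arg_cong2[where f = "(+)"] sum.cong refl expectation_pair_collected_by_all) auto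
    finally show ?thesis using that by simp
  qed
  have "measure_pmf.expectation model (\<lambda>f. (X_all m f)\<^sup>2)
      = measure_pmf.expectation model
          (\<lambda>f. \<Sum>j<n. \<Sum>l<n. \<Prod>i\<in>{1..m}. of_bool (j \<in> f i \<and> l \<in> f i))"
    by (intro integral_cong_AE AE_pmfI) (auto simp: X_all_squared_eq_sum)
  also have "\<dots> = (\<Sum>j<n. \<Sum>l<n. ?pair j l)"
    by (simp add: Bochner_Integration.integral_sum integrable_measure_pmf_finite finite_set_pmf_model)
  also have "\<dots> = (\<Sum>j<n. prob_all + (real n - 1) * (prob_all * cond_prob_all))"
    by (intro sum.cong refl row_sum) simp
  finally show ?thesis by (simp add: algebra_simps)
qed

lemma expectation_X_all_scaled:
  assumes "2 \<le> m"
  shows "real (n - a 1) * real (n - a 2) / real n * prob_all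
           = (1 - real (a 1) / real n) * (1 - real (a 2) / real n) * measure_pmf.expectation model (X_all m)"
proof (cases "n = 0")
  case False
  have "a 1 \<le> n" "a 2 \<le> n" using sizes_le assms by auto
  with False show ?thesis by (simp add: expectation_X_all of_nat_diff field_simps)
qed (use expectation_X_all in simp)

lemma variance_X_all:
  "measure_pmf.variance model (X_all m)
     = measure_pmf.expectation model (X_all m) *
       dispersion (real n) (\<lambda>i. real (a i) / real n) (\<lambda>i. (real (a i) - 1) / (real n - 1)) {1..m}"
proof -
  have "measure_pmf.variance model (X_all m)
      = measure_pmf.expectation model (\<lambda>f. (X_all m f)\<^sup>2) - (measure_pmf.expectation model (X_all m))\<^sup>2"
    by (intro measure_pmf.variance_eq integrable_measure_pmf_finite finite_set_pmf_model)
  then show ?thesis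
    unfolding expectation_X_all expectation_X_all_squared dispersion_def
      prob_all_def[symmetric] cond_prob_all_def[symmetric]
    by (simp add: power2_eq_square algebra_simps)
qed

end

lemma variance_X_all_bounds:
  fixes n m :: nat and a :: "nat \<Rightarrow> nat"
  assumes "2 \<le> m" "1 \<le> a 1" "a m \<le> n - 1" and mono: "\<forall>i\<in>{1..<m}. a i \<le> a (Suc i)"
  defines "E \<equiv> measure_pmf.expectation (coupon_model n m a) (X_all m)"
    and "V \<equiv> measure_pmf.variance (coupon_model n m a) (X_all m)"
    and "c \<equiv> (1 - real (a 1) / real n) * (1 - real (a 2) / real n)"
  shows "real (n - a 1) * real (n - a 2) / real n * (\<Prod>i\<in>{1..m}. real (a i) / real n) = c * E"
    and "0 < c * E" "c * E \<le> V" "V \<le> 2 * real m ^ 2 * (c * E)"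
proof -
  have a_mono: "a j \<le> a i" if "1 \<le> j" "j \<le> i" "i \<le> m" for i j
    by (rule lift_Suc_mono_le_ivl[of "{1..<m}"]) (use mono that in auto)
  have a_bounds: "1 \<le> a i" "a i \<le> n - 1" if "i \<in> {1..m}" for i
    using a_mono[of 1 i] a_mono[of i m] that assms(2,3) by auto
  have "2 \<le> n" using a_bounds[of 1] \<open>2 \<le> m\<close> by simp
  interpret coupon_collection n m a
    using \<open>2 \<le> m\<close> a_bounds by unfold_locales force+
  show "real (n - a 1) * real (n - a 2) / real n * (\<Prod>i\<in>{1..m}. real (a i) / real n) = c * E"
    using expectation_X_all_scaled[OF \<open>2 \<le> m\<close>] by (simp add: prob_all_def c_def E_def)
  define p where "p = (\<lambda>i. real (a i) / real n)"
  define y where "y = (\<lambda>i. (real (a i) - 1) / (real n - 1))"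
  have rel: "(real n - 1) * y i = real n * p i - 1" for i
    using \<open>2 \<le> n\<close> by (simp add: p_def y_def)
  have y01: "0 \<le> y i \<and> y i \<le> 1" if "i \<in> {1..m}" for i
    using a_bounds[OF that] \<open>2 \<le> n\<close> by (auto simp: y_def of_nat_diff)
  have p1_min: "p 1 \<le> p i" if "i \<in> {1..m}" for i
    using a_mono[of 1 i] that by (simp add: p_def divide_right_mono)
  have p2_min: "p 2 \<le> p i" if "i \<in> {2..m}" for i
    using a_mono[of 2 i] that by (simp add: p_def divide_right_mono)
  have c_eq: "c = (1 - p 1) * (1 - p 2)" by (simp add: c_def p_def)
  have E_eq: "E = real n * prod p {1..m}"
    by (simp add: E_def expectation_X_all prob_all_def p_def)
  have V_eq: "V = E * dispersion (real n) p y {1..m}"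
    by (simp add: V_def E_def variance_X_all p_def y_def)
  have "0 < p i" if "i \<in> {1..m}" for i
    using a_bounds(1)[OF that] \<open>2 \<le> n\<close> by (simp add: p_def)
  then have "0 < prod p {1..m}" by (rule prod_pos)
  moreover have "p i < 1" if "i \<in> {1..m}" for i
    using a_bounds[OF that] \<open>2 \<le> n\<close> by (simp add: p_def)
  ultimately have "0 < c" "0 < E"
    using \<open>2 \<le> m\<close> \<open>2 \<le> n\<close> by (auto simp: c_eq E_eq)
  then show "0 < c * E" by simp
  note bounds = dispersion_bounds[of "real n" m y p, OF _ \<open>2 \<le> m\<close> rel y01 p1_min p2_min]
  show "c * E \<le> V"
    using mult_left_mono[OF bounds(1), of E] \<open>0 < E\<close> \<open>2 \<le> n\<close>
    unfolding c_eq V_eq by (simp add: mult.commute)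
  show "V \<le> 2 * real m ^ 2 * (c * E)"
    using mult_left_mono[OF bounds(2), of E] \<open>0 < E\<close> \<open>2 \<le> n\<close>
    unfolding c_eq V_eq by (simp add: ac_simps)
qed

lemma asymp_order_if_ratio_bounded:
  fixes x y :: "nat \<Rightarrow> real"
  assumes "0 < c" "\<forall>\<^sub>F k in sequentially. 0 < y k \<and> c * y k \<le> x k \<and> x k \<le> C * y k"
  shows "asymp_order x y"
proof -
  have ratio: "\<forall>\<^sub>F k in sequentially. ereal c \<le> ereal (x k / y k) \<and> ereal (x k / y k) \<le> ereal C"
    using assms(2) by eventually_elim (simp add: field_simps)
  have "ereal c \<le> liminf (\<lambda>k. ereal (x k / y k))"
    using ratio by (intro Liminf_bounded) (auto elim: eventually_mono)
  moreover have "limsup (\<lambda>k. ereal (x k / y k)) \<le> ereal C"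
    using ratio by (intro Limsup_bounded) (auto elim: eventually_mono)
  moreover have "liminf (\<lambda>k. ereal (x k / y k)) \<le> limsup (\<lambda>k. ereal (x k / y k))"
    by (rule Liminf_le_Limsup) simp
  moreover have "0 < ereal c" "ereal C < \<infinity>" using \<open>0 < c\<close> by simp_all
  ultimately show ?thesis
    unfolding asymp_order_def by (meson le_less_trans less_le_trans)
qed

theorem theorem2:
  fixes m :: nat and N :: "nat \<Rightarrow> nat" and a :: "nat \<Rightarrow> nat \<Rightarrow> nat"
  assumes m2: "m \<ge> 2"
    and A1: "filterlim N at_top sequentially"
    and A2: "\<And>i. i \<in> {1..m} \<Longrightarrow>
               filterlim (\<lambda>k. a k i) at_top sequentially \<and>
               filterlim (\<lambda>k. N k - a k i) at_top sequentially"
    and A3: "\<And>k. 1 \<le> a k 1 \<and> a k m \<le> N k - 1 \<and> (\<forall>i\<in>{1..<m}. a k i \<le> a k (Suc i))"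
    and A4: "\<And>i. i \<in> {1..m} \<Longrightarrow>
               \<exists>\<alpha>\<in>{0..1}. (\<lambda>k. real (a k i) / real (N k)) \<longlonglongrightarrow> \<alpha>"
  shows "asymp_order
           (\<lambda>k. measure_pmf.variance (coupon_model (N k) m (a k)) (X_all m))
           (\<lambda>k. real (N k - a k 1) * real (N k - a k 2) / real (N k) *
                (\<Prod>i\<in>{1..m}. real (a k i) / real (N k)))
       \<and> (\<forall>k. real (N k - a k 1) * real (N k - a k 2) / real (N k) *
                (\<Prod>i\<in>{1..m}. real (a k i) / real (N k))
              = (1 - real (a k 1) / real (N k)) * (1 - real (a k 2) / real (N k)) *
                measure_pmf.expectation (coupon_model (N k) m (a k)) (X_all m))"
proof -
  \<comment> \<open>The two-sided bound holds for every single n.\<close>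
  note bounds = variance_X_all_bounds[OF m2 conjunct1[OF A3] conjunct1[OF conjunct2[OF A3]]
                                       conjunct2[OF conjunct2[OF A3]]]
  have "asymp_order
           (\<lambda>k. measure_pmf.variance (coupon_model (N k) m (a k)) (X_all m))
           (\<lambda>k. real (N k - a k 1) * real (N k - a k 2) / real (N k) *
                (\<Prod>i\<in>{1..m}. real (a k i) / real (N k)))"
    unfolding bounds(1)
    using bounds(2-4) by (intro asymp_order_if_ratio_bounded[where c = 1] always_eventually) auto
  with bounds(1) show ?thesis by blast
qed

end
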